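(* There exist a compact metric space $X$ and a flow $\phi$ on $X$ which is not singular-expansive but such that, for every compact invariant set $\Lambda\subset X$ with $\Lambda\cap Sing(\phi)=\emptyset$, the restricted flow $\phi|_\Lambda$ is expansive.
   Context: A flow is a continuous $\phi:\mathbb{R}\times X\to X$ with $\phi_0=\mathrm{id}$, $\phi_{t+s}=\phi_t\circ\phi_s$; $\phi_I(x)=\{\phi_t(x):t\in I\}$; $Sing(\phi)$ is the set of fixed points; $dist(z,A)=\inf_{a\in A}d(z,a)$, with $dist(z,\emptyset)=diam(X)$. $\phi$ is singular-expansive if for every $\epsilon>0$ there is $\delta>0$ such that whenever $x,y\in X$ and an increasing homeomorphism $s:\mathbb{R}\to\mathbb{R}$ satisfy $d(\phi_t(x),\phi_{s(t)}(y))\le\delta\,dist(\phi_t(x),Sing(\phi))$ for all $t$, then $\phi_{s(t_0)}(y)\in\phi_{[t_0-\epsilon,t_0+\epsilon]}(x)$ for some $t_0\in\mathbb{R}$. A flow $\psi$ on a compact metric space $Y$ is expansive if for every $\epsilon>0$ there is $\delta>0$ such that whenever $x,y\in Y$ and a continuous $s:\mathbb{R}\to\mathbb{R}$ with $s(0)=0$ satisfy $d(\psi_t(x),\psi_{s(t)}(y))\le\delta$ for all $t$, then $y\in\psi_{[-\epsilon,\epsilon]}(x)$. *)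

theory Defs
  imports "HOL-Analysis.Analysis"
begin

definition is_flow :: "'a set \<Rightarrow> ('a \<Rightarrow> 'a \<Rightarrow> real) \<Rightarrow> (real \<Rightarrow> 'a \<Rightarrow> 'a) \<Rightarrow> bool" where
  "is_flow X d phi \<longleftrightarrow>
     continuous_map (prod_topology euclideanreal (Metric_space.mtopology X d))
                    (Metric_space.mtopology X d) (\<lambda>(t, x). phi t x)
   \<and> (\<forall>x\<in>X. phi 0 x = x)
   \<and> (\<forall>t s. \<forall>x\<in>X. phi (t + s) x = phi t (phi s x))"

definition Sing :: "'a set \<Rightarrow> (real \<Rightarrow> 'a \<Rightarrow> 'a) \<Rightarrow> 'a set" where
  "Sing X phi = {x \<in> X. \<forall>t. phi t x = x}"

definition orbit_seg :: "(real \<Rightarrow> 'a \<Rightarrow> 'a) \<Rightarrow> real set \<Rightarrow> 'a \<Rightarrow> 'a set" where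
  "orbit_seg phi I x = (\<lambda>t. phi t x) ` I"

definition mdiam :: "'a set \<Rightarrow> ('a \<Rightarrow> 'a \<Rightarrow> real) \<Rightarrow> real" where
  "mdiam X d = Sup {d x y | x y. x \<in> X \<and> y \<in> X}"

definition distset :: "'a set \<Rightarrow> ('a \<Rightarrow> 'a \<Rightarrow> real) \<Rightarrow> 'a \<Rightarrow> 'a set \<Rightarrow> real" where
  "distset X d z A = (if A = {} then mdiam X d else Inf {d z a | a. a \<in> A})"

definition increasing_homeo :: "(real \<Rightarrow> real) \<Rightarrow> bool" where
  "increasing_homeo s \<longleftrightarrow> strict_mono s \<and> continuous_on UNIV s \<and> surj s"

definition singular_expansive :: "'a set \<Rightarrow> ('a \<Rightarrow> 'a \<Rightarrow> real) \<Rightarrow> (real \<Rightarrow> 'a \<Rightarrow> 'a) \<Rightarrow> bool" where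
  "singular_expansive X d phi \<longleftrightarrow>
    (\<forall>\<epsilon>>0. \<exists>\<delta>>0. \<forall>x\<in>X. \<forall>y\<in>X. \<forall>s. increasing_homeo s \<and>
        (\<forall>t. d (phi t x) (phi (s t) y) \<le> \<delta> * distset X d (phi t x) (Sing X phi))
        \<longrightarrow> (\<exists>t0. phi (s t0) y \<in> orbit_seg phi {t0 - \<epsilon> .. t0 + \<epsilon>} x))"

definition expansive_flow :: "'a set \<Rightarrow> ('a \<Rightarrow> 'a \<Rightarrow> real) \<Rightarrow> (real \<Rightarrow> 'a \<Rightarrow> 'a) \<Rightarrow> bool" where
  "expansive_flow Y d psi \<longleftrightarrow>
    (\<forall>\<epsilon>>0. \<exists>\<delta>>0. \<forall>x\<in>Y. \<forall>y\<in>Y. \<forall>s. continuous_on UNIV s \<and> s 0 = 0 \<and>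
        (\<forall>t. d (psi t x) (psi (s t) y) \<le> \<delta>)
        \<longrightarrow> y \<in> orbit_seg psi {-\<epsilon> .. \<epsilon>} x)"

definition invariant_set :: "(real \<Rightarrow> 'a \<Rightarrow> 'a) \<Rightarrow> 'a set \<Rightarrow> bool" where
  "invariant_set phi L \<longleftrightarrow> (\<forall>t. \<forall>x\<in>L. phi t x \<in> L)"

end

theory Submission
  imports Defs
begin

text \<open>Take X = [0,1] with singularities 0 and the dyadic points 2^-k. On each cell
  [2^-(k+1), 2^-k] let the flow be the logistic flow of u' = u(1 - u), moved affinely onto
  the cell and slowed down by the factor k + 1. A nonempty compact invariant set avoiding the
  singularities would contain a largest point in some cell, and the flow pushes that point
  further up inside the cell; so no such set exists and the expansiveness condition holds
  vacuously. On the other hand, in the k-th cell the time-2 shift moves a point by at most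
  e^(2/(k+1)) - 1 times its distance to the singularities (in cell coordinates u the
  displacement is bounded by u (1 - u) (e^(2/(k+1)) - 1)). Comparing an orbit of a deep cell
  with itself under the reparametrisation t + 2 therefore satisfies the hypothesis of singular
  expansiveness for any given \<delta>, although the orbit is injective in time.\<close>

lemma Metric_space_dist: "Metric_space (S :: 'a :: metric_space set) dist"
  using Met_TC.subspace by blast

lemma mtopology_dist: "Metric_space.mtopology (S :: 'a :: metric_space set) dist = top_of_set S"
proof -
  interpret Submetric UNIV dist S by unfold_locales auto
  show ?thesis using mtopology_submetric by simp
qed

lemma distset_ge:
  assumes "A \<noteq> {}" "\<And>a. a \<in> A \<Longrightarrow> b \<le> d z a"
  shows "b \<le> distset X d z A"
proof -
  have "b \<le> Inf {d z a | a. a \<in> A}"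
    using assms by (intro cInf_greatest) auto
  with assms(1) show ?thesis unfolding distset_def by simp
qed

lemma not_singular_expansiveI:
  assumes "\<And>\<delta>. \<delta> > 0 \<Longrightarrow> \<exists>x\<in>X. inj (\<lambda>t. phi t x) \<and>
             (\<forall>t. d (phi t x) (phi (t + 2) x) \<le> \<delta> * distset X d (phi t x) (Sing X phi))"
  shows "\<not> singular_expansive X d phi"
proof
  assume "singular_expansive X d phi"
  then obtain \<delta> where "\<delta> > 0" and expansive: "\<forall>x\<in>X. \<forall>y\<in>X. \<forall>s. increasing_homeo s \<and>
        (\<forall>t. d (phi t x) (phi (s t) y) \<le> \<delta> * distset X d (phi t x) (Sing X phi))
        \<longrightarrow> (\<exists>t0. phi (s t0) y \<in> orbit_seg phi {t0 - 1 .. t0 + 1} x)"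
    unfolding singular_expansive_def using zero_less_one by blast
  then obtain x where "x \<in> X" and inj: "inj (\<lambda>t. phi t x)"
    and close: "\<forall>t. d (phi t x) (phi (t + 2) x) \<le> \<delta> * distset X d (phi t x) (Sing X phi)"
    using assms by blast
  have "increasing_homeo (\<lambda>t. t + 2)"
    unfolding increasing_homeo_def
  proof (intro conjI)
    show "strict_mono (\<lambda>t::real. t + 2)" by (rule strict_monoI) simp
    show "continuous_on UNIV (\<lambda>t::real. t + 2)" by (intro continuous_intros)
    show "surj (\<lambda>t::real. t + 2)" by (rule surjI[of _ "\<lambda>t. t - 2"]) simp
  qed
  with expansive \<open>x \<in> X\<close> close
  obtain t0 where "phi (t0 + 2) x \<in> orbit_seg phi {t0 - 1 .. t0 + 1} x" by blast
  then obtain r where "r \<le> t0 + 1" "phi (t0 + 2) x = phi r x"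
    unfolding orbit_seg_def by auto
  with injD[OF inj] show False by fastforce
qed

lemma continuous_on_jointly_lipschitz:
  fixes f :: "real \<Rightarrow> real \<Rightarrow> real" and L :: "real \<Rightarrow> real"
  assumes time: "\<And>s t x. x \<in> S \<Longrightarrow> \<bar>f s x - f t x\<bar> \<le> \<bar>s - t\<bar>"
    and space: "\<And>t x y. x \<in> S \<Longrightarrow> y \<in> S \<Longrightarrow> \<bar>f t y - f t x\<bar> \<le> L t * \<bar>y - x\<bar>"
    and L: "\<And>t. 0 \<le> L t"
  shows "continuous_on (UNIV \<times> S) (\<lambda>(t, x). f t x)"
  unfolding continuous_on_iff
proof (intro ballI allI impI)
  fix z :: "real \<times> real" and e :: real assume "z \<in> UNIV \<times> S" "(0::real) < e"
  then obtain t x where z: "z = (t, x)" "x \<in> S" by auto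
  define C where "C = 1 + L t"
  have "0 < C" using L[of t] by (simp add: C_def)
  show "\<exists>r>0. \<forall>z'\<in>UNIV \<times> S. dist z' z < r \<longrightarrow>
          dist ((\<lambda>(t, x). f t x) z') ((\<lambda>(t, x). f t x) z) < e"
  proof (intro exI[of _ "e / C"] conjI ballI impI)
    show "0 < e / C" using \<open>0 < e\<close> \<open>0 < C\<close> by simp
    fix z' :: "real \<times> real" assume "z' \<in> UNIV \<times> S" "dist z' z < e / C"
    then obtain s y where z': "z' = (s, y)" "y \<in> S" by auto
    have ds: "\<bar>s - t\<bar> \<le> dist z' z" and dy: "\<bar>y - x\<bar> \<le> dist z' z"
      using dist_fst_le[of z' z] dist_snd_le[of z' z] z z' by (auto simp: dist_real_def)
    have "\<bar>f s y - f t x\<bar> \<le> \<bar>f s y - f t y\<bar> + \<bar>f t y - f t x\<bar>" by simp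
    also have "\<dots> \<le> dist z' z + L t * dist z' z"
      using time[OF z'(2), of s t] space[OF z(2) z'(2), of t] ds dy L[of t]
      by (smt (verit) mult_left_mono)
    also have "\<dots> = C * dist z' z" by (simp add: C_def algebra_simps)
    also have "\<dots> < C * (e / C)"
      using \<open>dist z' z < e / C\<close> \<open>0 < C\<close> by (intro mult_strict_left_mono)
    also have "\<dots> = e" using \<open>0 < C\<close> by simp
    finally show "dist ((\<lambda>(t, x). f t x) z') ((\<lambda>(t, x). f t x) z) < e"
      using z z' by (simp add: dist_real_def)
  qed
qed

section \<open>The logistic flow\<close>

text \<open>The solution of u' = u (1 - u) with u(0) = u.\<close>

definition logistic_flow :: "real \<Rightarrow> real \<Rightarrow> real" where
  "logistic_flow T u = u * exp T / (1 - u + u * exp T)"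

lemma logistic_denom_ge_min:
  fixes u T :: real
  assumes "0 \<le> u" "u \<le> 1"
  shows "min 1 (exp T) \<le> 1 - u + u * exp T"
proof -
  have "(1 - u) * min 1 (exp T) \<le> 1 - u" "u * min 1 (exp T) \<le> u * exp T"
    using assms by (auto intro: mult_left_mono[of "min 1 (exp T)" 1 "1 - u", simplified]
                                mult_left_mono[of "min 1 (exp T)" "exp T" u])
  moreover have "(1 - u) * min 1 (exp T) + u * min 1 (exp T) = min 1 (exp T)"
    by (simp add: algebra_simps)
  ultimately show ?thesis by linarith
qed

lemma logistic_denom_pos:
  fixes u T :: real
  assumes "0 \<le> u" "u \<le> 1"
  shows "0 < 1 - u + u * exp T"
  using logistic_denom_ge_min[OF assms, of T] by (smt (verit) exp_gt_zero)

lemma logistic_flow_bounds: "0 \<le> u \<Longrightarrow> u \<le> 1 \<Longrightarrow> 0 \<le> logistic_flow T u \<and> logistic_flow T u \<le> 1"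
  using logistic_denom_pos[of u T] unfolding logistic_flow_def by (auto simp: divide_simps)

lemma logistic_flow_bounds_open:
  "0 < u \<Longrightarrow> u < 1 \<Longrightarrow> 0 < logistic_flow T u \<and> logistic_flow T u < 1"
  using logistic_denom_pos[of u T] unfolding logistic_flow_def by (auto simp: divide_simps)

lemma logistic_flow_left [simp]: "logistic_flow T 0 = 0"
  and logistic_flow_right [simp]: "logistic_flow T 1 = 1"
  and logistic_flow_time_0 [simp]: "logistic_flow 0 u = u"
  unfolding logistic_flow_def by auto

lemma logistic_flow_add:
  assumes "0 \<le> u" "u \<le> 1"
  shows "logistic_flow (T + S) u = logistic_flow T (logistic_flow S u)"
proof -
  define D1 where "D1 = 1 - u + u * exp S"
  define D2 where "D2 = 1 - u + u * exp (T + S)"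
  have pos: "D1 > 0" "D2 > 0" using logistic_denom_pos[OF assms] D1_def D2_def by auto
  have flow_S: "logistic_flow S u = u * exp S / D1" unfolding logistic_flow_def D1_def by simp
  have "1 - logistic_flow S u + logistic_flow S u * exp T = (D1 - u * exp S + u * exp S * exp T) / D1"
    using pos unfolding flow_S by (simp add: field_simps)
  also have "D1 - u * exp S + u * exp S * exp T = D2"
    unfolding D1_def D2_def by (simp add: exp_add algebra_simps)
  finally have denom: "1 - logistic_flow S u + logistic_flow S u * exp T = D2 / D1" .
  have "logistic_flow T (logistic_flow S u) = (u * exp S / D1) * exp T / (D2 / D1)"
    unfolding logistic_flow_def[of T] denom by (simp add: flow_S)
  also have "\<dots> = u * exp (T + S) / D2" using pos by (simp add: field_simps exp_add)
  finally show ?thesis unfolding logistic_flow_def D2_def by simp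
qed

lemma logistic_flow_increment:
  assumes "0 \<le> p" "p \<le> 1"
  shows "logistic_flow c p - p = p * (1 - p) * (exp c - 1) / (1 + p * (exp c - 1))"
  using logistic_denom_pos[OF assms, of c] unfolding logistic_flow_def by (simp add: field_simps)

lemma logistic_flow_increment_le:
  assumes "0 \<le> p" "p \<le> 1" "0 \<le> c"
  shows "0 \<le> logistic_flow c p - p" "logistic_flow c p - p \<le> p * (1 - p) * (exp c - 1)"
proof -
  have num: "0 \<le> p * (1 - p) * (exp c - 1)" and "0 \<le> p * (exp c - 1)" using assms by simp_all
  then have "1 \<le> 1 + p * (exp c - 1)" by simp
  then show "0 \<le> logistic_flow c p - p" "logistic_flow c p - p \<le> p * (1 - p) * (exp c - 1)"
    unfolding logistic_flow_increment[OF assms(1,2)]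
    using divide_left_mono[OF _ num, of 1 "1 + p * (exp c - 1)"] num by simp_all
qed

lemma logistic_flow_increment_time:
  assumes "0 \<le> u" "u \<le> 1" "T \<le> S"
  shows "0 \<le> logistic_flow S u - logistic_flow T u \<and> logistic_flow S u - logistic_flow T u \<le> S - T"
proof -
  define p where "p = logistic_flow T u"
  define w where "w = exp (S - T) - 1"
  have p: "0 \<le> p" "p \<le> 1" using logistic_flow_bounds assms p_def by auto
  have w: "0 \<le> w" "0 \<le> p * w" "0 < 1 + p * w" using assms p by (simp_all add: w_def add_pos_nonneg)
  have incr: "logistic_flow S u - logistic_flow T u = p * (1 - p) * w / (1 + p * w)"
    using logistic_flow_add[OF assms(1,2), of "S - T" T] logistic_flow_increment[OF p, of "S - T"]
    by (simp add: p_def w_def)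
  have "p * (1 - p) * w / (1 + p * w) \<le> p * w / (1 + p * w)"
    using p w by (intro divide_right_mono mult_right_mono) (auto simp: mult_left_le)
  also have "\<dots> \<le> ln (1 + p * w)"
    using ln_add1_ge[of "p * w"] w by (simp add: add.commute)
  also have "\<dots> \<le> ln (1 + w)"
    using p w by (subst ln_le_cancel_iff) (auto simp: mult_left_le_one_le)
  also have "\<dots> = S - T" by (simp add: w_def)
  finally show ?thesis using incr p w by simp
qed

lemma logistic_flow_lipschitz_time:
  assumes "0 \<le> u" "u \<le> 1"
  shows "\<bar>logistic_flow S u - logistic_flow T u\<bar> \<le> \<bar>S - T\<bar>"
  using logistic_flow_increment_time[OF assms, of S T] logistic_flow_increment_time[OF assms, of T S]
  by (cases "T \<le> S") auto

lemma logistic_flow_strict_mono: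
  assumes "0 < u" "u < 1"
  shows "strict_mono (\<lambda>T. logistic_flow T u)"
proof (rule strict_monoI)
  fix T S :: real assume "T < S"
  define p where "p = logistic_flow T u"
  have p: "0 < p" "p < 1" using logistic_flow_bounds_open assms p_def by auto
  have "0 < p * (1 - p) * (exp (S - T) - 1) / (1 + p * (exp (S - T) - 1))"
    using p \<open>T < S\<close> by (simp add: zero_less_mult_iff add_pos_pos)
  also have "\<dots> = logistic_flow S u - logistic_flow T u"
    using logistic_flow_add[of u "S - T" T] logistic_flow_increment[of p "S - T"] assms p
    by (simp add: p_def)
  finally show "logistic_flow T u < logistic_flow S u" by simp
qed

lemma logistic_flow_lipschitz_space:
  assumes "0 \<le> u" "u \<le> 1" "0 \<le> v" "v \<le> 1"
  shows "\<bar>logistic_flow T u - logistic_flow T v\<bar> \<le> exp \<bar>T\<bar> * \<bar>u - v\<bar>"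
proof -
  define Du where "Du = 1 - u + u * exp T"
  define Dv where "Dv = 1 - v + v * exp T"
  define m where "m = min 1 (exp T)"
  have ge: "m \<le> Du" "m \<le> Dv" "0 < m"
    using logistic_denom_ge_min assms by (auto simp: Du_def Dv_def m_def)
  have "logistic_flow T u - logistic_flow T v = exp T * (u - v) / (Du * Dv)"
    using ge unfolding logistic_flow_def Du_def Dv_def by (simp add: field_simps)
  then have "\<bar>logistic_flow T u - logistic_flow T v\<bar> = exp T * \<bar>u - v\<bar> / (Du * Dv)"
    using ge by (simp add: abs_mult abs_of_pos)
  also have "\<dots> \<le> exp T * \<bar>u - v\<bar> / (m * m)"
    using ge by (intro divide_left_mono mult_mono) auto
  also have "\<dots> = exp T / (m * m) * \<bar>u - v\<bar>" by simp
  also have "exp T / (m * m) = exp \<bar>T\<bar>"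
    by (cases "T \<ge> 0") (simp_all add: m_def exp_minus divide_inverse)
  finally show ?thesis by simp
qed

section \<open>A flow on [0,1] slowing down near 0\<close>

definition cell_base :: "nat \<Rightarrow> real" where
  "cell_base k = 1 / 2 ^ (k + 1)"

definition slowdown :: "nat \<Rightarrow> real" where
  "slowdown k = real k + 1"

definition cell_flow :: "nat \<Rightarrow> real \<Rightarrow> real \<Rightarrow> real" where
  "cell_flow k t x = cell_base k + cell_base k * logistic_flow (t / slowdown k) (x / cell_base k - 1)"

definition cell_index :: "real \<Rightarrow> nat" where
  "cell_index x = (LEAST k. cell_base k < x)"

definition slow_flow :: "real \<Rightarrow> real \<Rightarrow> real" where
  "slow_flow t x = (if x \<le> 0 then x else cell_flow (cell_index x) t x)"

lemma cell_base_pos: "0 < cell_base k"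
  unfolding cell_base_def by simp

lemma cell_base_le_half: "cell_base k \<le> 1 / 2"
  unfolding cell_base_def by (simp add: divide_simps)

lemma cell_base_Suc: "2 * cell_base (Suc k) = cell_base k"
  unfolding cell_base_def by simp

lemma cell_base_less: "j < k \<Longrightarrow> 2 * cell_base k \<le> cell_base j"
  unfolding cell_base_def using power_increasing[of "Suc j" k "2::real"] by (simp add: divide_simps)

lemma slowdown_ge_1: "1 \<le> slowdown k"
  unfolding slowdown_def by simp

lemma ex_cell_base_less: "0 < x \<Longrightarrow> \<exists>k. cell_base k < x"
proof -
  assume "0 < x"
  then obtain n where "(1 / 2 :: real) ^ n < x" using real_arch_pow_inv[of x "1 / 2"] by auto
  moreover have "cell_base n \<le> (1 / 2) ^ n" unfolding cell_base_def by (simp add: divide_simps)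
  ultimately show ?thesis by (intro exI[of _ n]) simp
qed

lemma cell_index_bounds:
  assumes "0 < x" "x \<le> 1"
  shows "cell_base (cell_index x) < x" "x \<le> 2 * cell_base (cell_index x)"
proof -
  show "cell_base (cell_index x) < x"
    unfolding cell_index_def using ex_cell_base_less[OF assms(1)] by (metis LeastI)
  show "x \<le> 2 * cell_base (cell_index x)"
  proof (cases "cell_index x")
    case 0 then show ?thesis using assms by (simp add: cell_base_def)
  next
    case (Suc j)
    then have "\<not> cell_base j < x" unfolding cell_index_def by (metis lessI not_less_Least)
    then show ?thesis using cell_base_Suc[of j] Suc by simp
  qed
qed

lemma cell_index_eq:
  assumes "cell_base j < x" "x \<le> 2 * cell_base j"
  shows "cell_index x = j"
proof -
  have "cell_index x \<le> j" unfolding cell_index_def using assms(1) by (rule Least_le)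
  moreover have "cell_base (cell_index x) < x" unfolding cell_index_def using assms(1) by (metis LeastI)
  then have "\<not> cell_index x < j" using cell_base_less[of "cell_index x" j] assms(2) by linarith
  ultimately show ?thesis by simp
qed

lemma cell_coord_bounds:
  assumes "cell_base k \<le> x" "x \<le> 2 * cell_base k"
  shows "0 \<le> x / cell_base k - 1" "x / cell_base k - 1 \<le> 1"
  using assms cell_base_pos[of k] by (auto simp: divide_simps)

lemma cell_coord_bounds_open:
  assumes "cell_base k < x" "x < 2 * cell_base k"
  shows "0 < x / cell_base k - 1" "x / cell_base k - 1 < 1"
  using assms cell_base_pos[of k] by (auto simp: divide_simps)

lemma cell_flow_bounds:
  assumes "cell_base k \<le> x" "x \<le> 2 * cell_base k"
  shows "cell_base k \<le> cell_flow k t x" "cell_flow k t x \<le> 2 * cell_base k"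
  using logistic_flow_bounds[OF cell_coord_bounds[OF assms], of "t / slowdown k"] cell_base_pos[of k]
  unfolding cell_flow_def by (auto simp: mult_left_le)

lemma cell_flow_left: "cell_flow k t (cell_base k) = cell_base k"
  and cell_flow_right: "cell_flow k t (2 * cell_base k) = 2 * cell_base k"
  using cell_base_pos[of k] unfolding cell_flow_def by simp_all

lemma cell_flow_time_0: "cell_flow k 0 x = x"
  using cell_base_pos[of k] unfolding cell_flow_def by (simp add: field_simps)

lemma cell_flow_add:
  assumes "cell_base k \<le> x" "x \<le> 2 * cell_base k"
  shows "cell_flow k (t + s) x = cell_flow k t (cell_flow k s x)"
proof -
  have "cell_flow k s x / cell_base k - 1 = logistic_flow (s / slowdown k) (x / cell_base k - 1)"
    using cell_base_pos[of k] unfolding cell_flow_def by (simp add: field_simps)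
  then show ?thesis
    using logistic_flow_add[OF cell_coord_bounds[OF assms]]
    unfolding cell_flow_def by (simp add: add_divide_distrib)
qed

lemma cell_flow_strict_mono:
  assumes "cell_base k < x" "x < 2 * cell_base k"
  shows "strict_mono (\<lambda>t. cell_flow k t x)"
proof (rule strict_monoI)
  fix s t :: real assume "s < t"
  then have "s / slowdown k < t / slowdown k"
    using slowdown_ge_1[of k] by (simp add: divide_strict_right_mono)
  then show "cell_flow k s x < cell_flow k t x"
    using strict_monoD[OF logistic_flow_strict_mono[OF cell_coord_bounds_open[OF assms]]] cell_base_pos[of k]
    unfolding cell_flow_def by simp
qed

lemma cell_flow_lipschitz_space:
  assumes "cell_base k \<le> x" "x \<le> 2 * cell_base k" "cell_base k \<le> y" "y \<le> 2 * cell_base k"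
  shows "\<bar>cell_flow k t x - cell_flow k t y\<bar> \<le> exp \<bar>t\<bar> * \<bar>x - y\<bar>"
proof -
  let ?a = "cell_base k" and ?T = "t / slowdown k"
  have "\<bar>cell_flow k t x - cell_flow k t y\<bar>
        = ?a * \<bar>logistic_flow ?T (x / ?a - 1) - logistic_flow ?T (y / ?a - 1)\<bar>"
    unfolding cell_flow_def using cell_base_pos[of k] by (simp add: abs_mult right_diff_distrib[symmetric])
  also have "\<dots> \<le> ?a * (exp \<bar>?T\<bar> * \<bar>(x / ?a - 1) - (y / ?a - 1)\<bar>)"
    by (rule mult_left_mono[OF logistic_flow_lipschitz_space[OF cell_coord_bounds[OF assms(1,2)]
          cell_coord_bounds[OF assms(3,4)]]]) (simp add: less_imp_le cell_base_pos)
  also have "\<dots> = exp \<bar>?T\<bar> * \<bar>x - y\<bar>"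
    using cell_base_pos[of k] by (simp add: field_simps abs_div abs_mult)
  also have "\<dots> \<le> exp \<bar>t\<bar> * \<bar>x - y\<bar>"
    using slowdown_ge_1[of k]
    by (intro mult_right_mono) (auto simp: abs_div divide_le_eq mult_le_cancel_left1)
  finally show ?thesis .
qed

lemma cell_flow_lipschitz_time:
  assumes "cell_base k \<le> x" "x \<le> 2 * cell_base k"
  shows "\<bar>cell_flow k s x - cell_flow k t x\<bar> \<le> \<bar>s - t\<bar>"
proof -
  let ?a = "cell_base k" and ?u = "x / cell_base k - 1"
  have "\<bar>cell_flow k s x - cell_flow k t x\<bar>
        = ?a * \<bar>logistic_flow (s / slowdown k) ?u - logistic_flow (t / slowdown k) ?u\<bar>"
    unfolding cell_flow_def using cell_base_pos[of k] by (simp add: abs_mult right_diff_distrib[symmetric])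
  also have "\<dots> \<le> 1 * \<bar>s / slowdown k - t / slowdown k\<bar>"
  proof (rule mult_mono)
    show "?a \<le> 1" using cell_base_le_half[of k] by simp
  qed (simp_all add: logistic_flow_lipschitz_time[OF cell_coord_bounds[OF assms]])
  also have "\<dots> = \<bar>s - t\<bar> / slowdown k"
    using slowdown_ge_1[of k] by (simp add: diff_divide_distrib[symmetric] abs_div)
  also have "\<dots> \<le> \<bar>s - t\<bar>"
    using slowdown_ge_1[of k] by (simp add: divide_le_eq mult_le_cancel_left1)
  finally show ?thesis .
qed

lemma slow_flow_eq_cell_flow:
  assumes "cell_base k \<le> x" "x \<le> 2 * cell_base k"
  shows "slow_flow t x = cell_flow k t x"
proof (cases "x = cell_base k")
  case True
  then have "cell_index x = Suc k"
    using cell_base_Suc[of k] cell_base_pos[of "Suc k"] by (intro cell_index_eq) auto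
  then show ?thesis
    using True cell_base_pos[of k] cell_flow_right[of "Suc k" t] cell_flow_left[of k t]
    unfolding slow_flow_def by (simp add: cell_base_Suc)
next
  case False
  then have "cell_index x = k" using assms by (intro cell_index_eq) auto
  then show ?thesis unfolding slow_flow_def using cell_base_pos[of k] assms by simp
qed

lemma slow_flow_zero [simp]: "slow_flow t 0 = 0"
  unfolding slow_flow_def by simp

lemma zero_or_in_cell:
  assumes "0 \<le> x" "x \<le> 1"
  obtains "x = 0" | k where "cell_base k < x" "x \<le> 2 * cell_base k"
  using cell_index_bounds[of x] assms by (cases "x = 0") auto

lemma slow_flow_bounds:
  assumes "0 \<le> x" "x \<le> 1"
  shows "0 \<le> slow_flow t x \<and> slow_flow t x \<le> 1"
  using assms
proof (cases rule: zero_or_in_cell)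
  case (2 k)
  then show ?thesis
    using slow_flow_eq_cell_flow[of k x t] cell_flow_bounds[of k x t] cell_base_pos[of k]
      cell_base_le_half[of k] by auto
qed simp

lemma slow_flow_time_0: "slow_flow 0 x = x"
  unfolding slow_flow_def by (simp add: cell_flow_time_0)

lemma slow_flow_add:
  assumes "0 \<le> x" "x \<le> 1"
  shows "slow_flow (t + s) x = slow_flow t (slow_flow s x)"
  using assms
proof (cases rule: zero_or_in_cell)
  case (2 k)
  then have x: "cell_base k \<le> x" "x \<le> 2 * cell_base k" by simp_all
  then have "cell_base k \<le> cell_flow k s x" "cell_flow k s x \<le> 2 * cell_base k"
    using cell_flow_bounds by auto
  then show ?thesis
    using slow_flow_eq_cell_flow[OF x] slow_flow_eq_cell_flow[of k "cell_flow k s x"] cell_flow_add[OF x]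
    by simp
qed simp

lemma slow_flow_lipschitz_time:
  assumes "0 \<le> x" "x \<le> 1"
  shows "\<bar>slow_flow s x - slow_flow t x\<bar> \<le> \<bar>s - t\<bar>"
  using assms
proof (cases rule: zero_or_in_cell)
  case (2 k)
  then show ?thesis using slow_flow_eq_cell_flow[of k x] cell_flow_lipschitz_time[of k x s t] by simp
qed simp

lemma slow_flow_below_base:
  assumes "0 \<le> x" "x \<le> cell_base i"
  shows "slow_flow t x \<le> cell_base i" "cell_base i - slow_flow t x \<le> exp \<bar>t\<bar> * (cell_base i - x)"
proof -
  have "x \<le> 1" using assms cell_base_le_half[of i] by simp
  have "slow_flow t x \<le> cell_base i \<and> cell_base i - slow_flow t x \<le> exp \<bar>t\<bar> * (cell_base i - x)"
    using assms(1) \<open>x \<le> 1\<close>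
  proof (cases rule: zero_or_in_cell)
    case 1
    then show ?thesis using cell_base_pos[of i] by simp
  next
    case (2 j)
    have "i < j"
      using 2 assms(2) cell_base_less[of j i] by (cases i j rule: linorder_cases) auto
    then have ji: "2 * cell_base j \<le> cell_base i" by (rule cell_base_less)
    have "2 * cell_base j - cell_flow j t x \<le> exp \<bar>t\<bar> * (2 * cell_base j - x)"
      using cell_flow_lipschitz_space[of j "2 * cell_base j" x t] 2 cell_flow_right[of j t]
        cell_base_pos[of j] by simp
    moreover have "cell_base i - 2 * cell_base j \<le> exp \<bar>t\<bar> * (cell_base i - 2 * cell_base j)"
      using ji by (simp add: mult_le_cancel_right1)
    ultimately show ?thesis
      using 2 ji slow_flow_eq_cell_flow[of j x t] cell_flow_bounds[of j x t]
      by (simp add: algebra_simps)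
  qed
  then show "slow_flow t x \<le> cell_base i" "cell_base i - slow_flow t x \<le> exp \<bar>t\<bar> * (cell_base i - x)"
    by auto
qed

lemma slow_flow_lipschitz_space_le:
  assumes "0 \<le> x" "x \<le> y" "y \<le> 1"
  shows "\<bar>slow_flow t y - slow_flow t x\<bar> \<le> exp \<bar>t\<bar> * \<bar>y - x\<bar>"
  using order_trans[OF assms(1,2)] assms(3)
proof (cases rule: zero_or_in_cell)
  case 1
  then show ?thesis using assms by simp
next
  case (2 i)
  show ?thesis
  proof (cases "cell_base i \<le> x")
    case True
    then show ?thesis
      using 2 assms cell_flow_lipschitz_space[of i y x t] slow_flow_eq_cell_flow[of i] by simp
  next
    case False
    have "cell_flow i t y - cell_base i \<le> exp \<bar>t\<bar> * (y - cell_base i)"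
      using cell_flow_lipschitz_space[of i y "cell_base i" t] 2 cell_flow_left[of i t] by simp
    moreover have "cell_base i \<le> cell_flow i t y" using cell_flow_bounds[of i y t] 2 by simp
    ultimately show ?thesis
      using False assms(1) slow_flow_below_base[of x i t] slow_flow_eq_cell_flow[of i y t] 2
      by (simp add: algebra_simps)
  qed
qed

lemma slow_flow_lipschitz_space:
  assumes "0 \<le> x" "x \<le> 1" "0 \<le> y" "y \<le> 1"
  shows "\<bar>slow_flow t y - slow_flow t x\<bar> \<le> exp \<bar>t\<bar> * \<bar>y - x\<bar>"
  using assms slow_flow_lipschitz_space_le[of x y t] slow_flow_lipschitz_space_le[of y x t]
  by (cases "x \<le> y") (auto simp: abs_minus_commute)

lemma is_flow_slow_flow: "is_flow {0..1} dist slow_flow"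
proof -
  have "continuous_on (UNIV \<times> {0..1}) (\<lambda>(t, x). slow_flow t x)"
    by (rule continuous_on_jointly_lipschitz[where L = "\<lambda>t. exp \<bar>t\<bar>"])
      (auto intro: slow_flow_lipschitz_time slow_flow_lipschitz_space less_imp_le)
  moreover have "prod_topology euclideanreal (top_of_set {0..1}) = top_of_set (UNIV \<times> {0..1::real})"
    using subtopology_Times[of euclideanreal euclideanreal UNIV "{0..1::real}"] by simp
  moreover have "(\<lambda>(t, x). slow_flow t x) \<in> UNIV \<times> {0..1} \<rightarrow> {0..1}"
    using slow_flow_bounds by auto
  ultimately show ?thesis
    unfolding is_flow_def mtopology_dist by (auto simp: slow_flow_time_0 slow_flow_add)
qed

lemma zero_in_Sing_slow_flow: "0 \<in> Sing {0..1} slow_flow"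
  unfolding Sing_def by simp

lemma cell_top_in_Sing_slow_flow: "2 * cell_base k \<in> Sing {0..1} slow_flow"
  using slow_flow_eq_cell_flow[of k "2 * cell_base k"] cell_flow_right[of k] cell_base_pos[of k]
    cell_base_le_half[of k] unfolding Sing_def by auto

lemma cell_interior_disjoint_Sing_slow_flow:
  assumes "cell_base k < w" "w < 2 * cell_base k"
  shows "w \<notin> Sing {0..1} slow_flow"
proof
  assume "w \<in> Sing {0..1} slow_flow"
  then have "cell_flow k 1 w = cell_flow k 0 w"
    using slow_flow_eq_cell_flow[of k w] assms unfolding Sing_def by simp
  with strict_monoD[OF cell_flow_strict_mono[OF assms], of 0 1] show False by simp
qed

lemma compact_invariant_disjoint_Sing_slow_flow:
  assumes "L \<subseteq> {0..1}" "compact L" "invariant_set slow_flow L" "L \<inter> Sing {0..1} slow_flow = {}"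
  shows "L = {}"
proof (rule ccontr)
  assume "L \<noteq> {}"
  then obtain x where "x \<in> L" by auto
  then have "0 \<le> x" "x \<le> 1" "x \<noteq> 0" using assms(1,4) zero_in_Sing_slow_flow by auto
  then obtain k where k: "cell_base k < x" "x \<le> 2 * cell_base k"
    by (cases rule: zero_or_in_cell) auto
  define K where "K = L \<inter> {cell_base k .. 2 * cell_base k}"
  have "compact K" "K \<noteq> {}"
    unfolding K_def using assms(2) \<open>x \<in> L\<close> k by (auto intro: compact_Int_closed)
  then obtain M where M: "M \<in> K" "\<forall>y\<in>K. y \<le> M" using compact_attains_sup by blast
  have "M \<noteq> 2 * cell_base k" using M assms(4) cell_top_in_Sing_slow_flow[of k] K_def by auto
  with M \<open>x \<in> L\<close> k have interior: "cell_base k < M" "M < 2 * cell_base k"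
    unfolding K_def by force+
  have "slow_flow 1 M \<in> L" using assms(3) M K_def unfolding invariant_set_def by auto
  moreover have "slow_flow 1 M = cell_flow k 1 M" using slow_flow_eq_cell_flow[of k M] interior by simp
  moreover have "M < cell_flow k 1 M"
    using strict_monoD[OF cell_flow_strict_mono[OF interior], of 0 1] cell_flow_time_0[of k M] interior
    by simp
  moreover have "cell_flow k 1 M \<in> {cell_base k .. 2 * cell_base k}"
    using cell_flow_bounds[of k M 1] interior by simp
  ultimately have "cell_flow k 1 M \<in> K" "M < cell_flow k 1 M" unfolding K_def by simp_all
  with M(2) show False by fastforce
qed

lemma distset_Sing_slow_flow_ge:
  assumes "0 < p" "p < 1"
  shows "cell_base k * (p * (1 - p))
    \<le> distset {0..1} dist (cell_base k + cell_base k * p) (Sing {0..1} slow_flow)"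
proof (rule distset_ge)
  show "Sing {0..1} slow_flow \<noteq> {}" using zero_in_Sing_slow_flow by auto
  fix a assume "a \<in> Sing {0..1} slow_flow"
  then have "\<not> (cell_base k < a \<and> a < 2 * cell_base k)"
    using cell_interior_disjoint_Sing_slow_flow[of k a] by blast
  moreover have "p * (1 - p) \<le> p" "p * (1 - p) \<le> 1 - p"
    using assms by (simp_all add: mult_left_le mult_left_le_one_le)
  then have "cell_base k * (p * (1 - p)) \<le> cell_base k * p"
    "cell_base k * (p * (1 - p)) \<le> cell_base k * (1 - p)"
    using cell_base_pos[of k] by (auto intro: mult_left_mono simp del: mult_le_cancel_left_pos)
  moreover have "cell_base k * (1 - p) = cell_base k - cell_base k * p" by (simp add: right_diff_distrib)
  ultimately show "cell_base k * (p * (1 - p)) \<le> dist (cell_base k + cell_base k * p) a"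
    unfolding dist_real_def by linarith
qed

lemma slow_flow_shift_close:
  assumes "\<delta> > 0"
  shows "\<exists>x\<in>{0..1}. inj (\<lambda>t. slow_flow t x) \<and>
    (\<forall>t. dist (slow_flow t x) (slow_flow (t + 2) x)
           \<le> \<delta> * distset {0..1} dist (slow_flow t x) (Sing {0..1} slow_flow))"
proof -
  have "0 < ln (1 + \<delta>)" using assms by simp
  obtain k :: nat where "2 / ln (1 + \<delta>) < real k" using reals_Archimedean2 by blast
  with \<open>0 < ln (1 + \<delta>)\<close> have "2 < real k * ln (1 + \<delta>)" by (simp add: divide_less_eq)
  with \<open>0 < ln (1 + \<delta>)\<close> have "2 / slowdown k < ln (1 + \<delta>)"
    using slowdown_ge_1[of k] by (simp add: slowdown_def divide_less_eq algebra_simps)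
  then have "exp (2 / slowdown k) \<le> exp (ln (1 + \<delta>))" by simp
  then have c: "0 < 2 / slowdown k" "exp (2 / slowdown k) - 1 \<le> \<delta>"
    using assms slowdown_ge_1[of k] by simp_all
  define x where "x = 3 / 2 * cell_base k"
  have x: "cell_base k < x" "x < 2 * cell_base k" "x \<in> {0..1}"
    using cell_base_pos[of k] cell_base_le_half[of k] by (auto simp: x_def)
  have orbit: "slow_flow t x = cell_base k + cell_base k * logistic_flow (t / slowdown k) (1 / 2)" for t
    using slow_flow_eq_cell_flow[of k x t] x cell_base_pos[of k] unfolding cell_flow_def x_def by simp
  have "inj (\<lambda>t. slow_flow t x)"
    using strict_mono_on_imp_inj_on[OF cell_flow_strict_mono[OF x(1,2)]] slow_flow_eq_cell_flow[of k x] x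
    by simp
  moreover have "dist (slow_flow t x) (slow_flow (t + 2) x)
      \<le> \<delta> * distset {0..1} dist (slow_flow t x) (Sing {0..1} slow_flow)" for t
  proof -
    define p where "p = logistic_flow (t / slowdown k) (1 / 2)"
    have p: "0 < p" "p < 1" using logistic_flow_bounds_open[of "1 / 2"] p_def by auto
    have shifted: "slow_flow (t + 2) x = cell_base k + cell_base k * logistic_flow (2 / slowdown k) p"
    proof -
      have "(t + 2) / slowdown k = 2 / slowdown k + t / slowdown k"
        by (metis add.commute add_divide_distrib)
      then show ?thesis
        using orbit[of "t + 2"] logistic_flow_add[of "1 / 2" "2 / slowdown k" "t / slowdown k"]
        by (simp add: p_def)
    qed
    define q where "q = logistic_flow (2 / slowdown k) p"
    have q: "0 \<le> q - p" "q - p \<le> p * (1 - p) * (exp (2 / slowdown k) - 1)"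
      using logistic_flow_increment_le[of p "2 / slowdown k"] p c by (simp_all add: q_def)
    have "slow_flow t x - slow_flow (t + 2) x = - (cell_base k * (q - p))"
      unfolding orbit[of t] shifted by (simp add: p_def q_def algebra_simps)
    then have "dist (slow_flow t x) (slow_flow (t + 2) x) = cell_base k * (q - p)"
      using q(1) cell_base_pos[of k] by (simp add: dist_real_def)
    also have "\<dots> \<le> cell_base k * (p * (1 - p) * \<delta>)"
    proof (rule mult_left_mono)
      have "0 \<le> p * (1 - p)" using p by simp
      then show "q - p \<le> p * (1 - p) * \<delta>"
        using q(2) mult_left_mono[OF c(2), of "p * (1 - p)"] by linarith
    qed (use cell_base_pos[of k] in simp)
    also have "\<dots> = \<delta> * (cell_base k * (p * (1 - p)))" by (simp only: mult_ac)
    also have "\<dots> \<le> \<delta> * distset {0..1} dist (slow_flow t x) (Sing {0..1} slow_flow)"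
      using distset_Sing_slow_flow_ge[OF p, of k] orbit[of t] assms by (simp add: p_def)
    finally show ?thesis .
  qed
  ultimately show ?thesis using x by blast
qed

theorem mainTheorem16:
  shows "\<exists>(X :: real set) d phi.
     Metric_space X d \<and> compact_space (Metric_space.mtopology X d) \<and> is_flow X d phi
   \<and> \<not> singular_expansive X d phi
   \<and> (\<forall>L. L \<subseteq> X \<and> compactin (Metric_space.mtopology X d) L \<and> invariant_set phi L
          \<and> L \<inter> Sing X phi = {} \<longrightarrow> expansive_flow L d phi)"
proof (intro exI conjI allI impI)
  show "Metric_space {0..1::real} dist" by (rule Metric_space_dist)
  show "compact_space (Metric_space.mtopology {0..1::real} dist)"
    unfolding mtopology_dist by (rule compact_space_subtopology) simp
  show "is_flow {0..1} dist slow_flow" by (rule is_flow_slow_flow)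
  show "\<not> singular_expansive {0..1} dist slow_flow"
    by (rule not_singular_expansiveI) (rule slow_flow_shift_close)
  fix L
  assume "L \<subseteq> {0..1} \<and> compactin (Metric_space.mtopology {0..1} dist) L \<and> invariant_set slow_flow L
          \<and> L \<inter> Sing {0..1} slow_flow = {}"
  moreover from this have "compact L" by (simp add: mtopology_dist compactin_subtopology)
  ultimately have "L = {}" using compact_invariant_disjoint_Sing_slow_flow by blast
  then show "expansive_flow L dist slow_flow" unfolding expansive_flow_def by simp
qed

end
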